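(* Let $P>0$ be the least common multiple of the indices in $N$ of the sublattices generated by the vertex sets of all $(d-1)$-simplices with vertices in $\mathcal A$ (i.e. all linearly independent $d$-element subsets of $\mathcal A$). A lattice element $w\in N\cap K$ satisfies $x^w\in M(\beta)$ if and only if there exists an integer $k>0$ such that $(\beta-w)+kPw$ lies in the semigroup generated by the elements of $\mathcal A$.
   Context: $N\cong\mathbb Z^d$ lattice, $M=\mathrm{Hom}(N,\mathbb Z)$, $\mathcal A=\{v_1,\dots,v_n\}\subset N$ generating $N$ with a homomorphism $\mathrm h:N\to\mathbb Z$, $\mathrm h(v_j)=1$; $K=\mathbb R_{\ge0}\mathrm{Conv}(\mathcal A)$; $\Sigma$ the simplicial fan supported on $K$ from a regular triangulation of $\mathrm{Conv}(\mathcal A)$ with vertices in $\mathcal A$; fix $\beta\in N$. $\mathbb C[K,\Sigma]$: basis $x^w$ ($w\in K\cap N$), $x^{w_1}x^{w_2}=x^{w_1+w_2}$ if a cone of $\Sigma$ contains both, else $0$. $\mathrm{Box}(\Sigma)$: $v\in N$ with $v=\sum q_jv_j$, $0\le q_j<1$, $q_j=0$ unless $v_j$ spans a ray of one fixed maximal cone; $\sigma(v)$ the smallest cone containing $v$. $R$: subring generated by $x^{v_j}$ with $\mathbb R_{\ge0}v_j\in\Sigma$. $M(\beta)$: the $R$-submodule generated by $x^v\prod_{j:r_j<0,\ \mathbb R_{\ge0}v_j\in\Sigma,\ \mathbb R_{\ge0}v_j\not\prec\sigma(v)}x^{v_j}$ for all $v\in\mathrm{Box}(\Sigma)$, $r\in\mathbb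 Z^n$ with $v+\sum r_jv_j=\beta$ and $r_j\ge0$ whenever $\mathbb R_{\ge0}v_j\notin\Sigma$. *)

theory Defs
  imports "HOL-Analysis.Analysis"
begin

text \<open>The lattice N is int^'d (d = CARD('d)); A = {v j | j < n}.
  Real points of N are obtained via rv.\<close>

definition rv :: "int^'d \<Rightarrow> real^'d" where
  "rv x = (\<chi> i. real_of_int (x $ i))"

definition gen_cone :: "(real^'d) set \<Rightarrow> (real^'d) set" where
  "gen_cone X = {y. \<exists>c. (\<forall>x\<in>X. 0 \<le> c x) \<and> y = (\<Sum>x\<in>X. c x *\<^sub>R x)}"

definition int_span :: "(int^'d) set \<Rightarrow> (int^'d) set" where
  "int_span X = {y. \<exists>F c. finite F \<and> F \<subseteq> X \<and> y = (\<Sum>x\<in>F. (c x :: int) *s x)}"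

definition nat_span :: "(int^'d) set \<Rightarrow> (int^'d) set" where
  "nat_span X = {y. \<exists>F c. finite F \<and> F \<subseteq> X \<and> y = (\<Sum>x\<in>F. int (c x :: nat) *s x)}"

definition lattice_index :: "(int^'d) set \<Rightarrow> nat" where
  "lattice_index L = card (range (\<lambda>w. (+) w ` L))"

definition simplices :: "(nat \<Rightarrow> int^'d) \<Rightarrow> nat \<Rightarrow> nat set set" where
  "simplices v n = {S. S \<subseteq> {..<n} \<and> card S = CARD('d) \<and> independent (rv ` v ` S)}"

definition P_const :: "(nat \<Rightarrow> int^'d) \<Rightarrow> nat \<Rightarrow> nat" where
  "P_const v n = Lcm ((\<lambda>S. lattice_index (int_span (v ` S))) ` simplices v n)"

text \<open>T (a set of index sets of maximal simplices) is a regular triangulation of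
  Conv(A) with vertices in A: the simplices are full-dimensional, cover Conv(A),
  and are exactly lower facets of the lifting by some height function omega
  (points of A lie on h = 1, so affine functions there are linear functionals).\<close>
definition regular_triangulation :: "(nat \<Rightarrow> int^'d) \<Rightarrow> nat \<Rightarrow> nat set set \<Rightarrow> bool" where
  "regular_triangulation v n T \<longleftrightarrow>
     T \<subseteq> simplices v n \<and>
     (\<Union>S\<in>T. convex hull (rv ` v ` S)) = convex hull (rv ` v ` {..<n}) \<and>
     (\<exists>\<omega> :: nat \<Rightarrow> real. \<forall>S\<in>T. \<exists>\<psi> :: real^'d \<Rightarrow> real. linear \<psi> \<and>
        (\<forall>j\<in>S. \<psi> (rv (v j)) = \<omega> j) \<and> (\<forall>j\<in>{..<n} - S. \<psi> (rv (v j)) < \<omega> j))"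

definition fan :: "(nat \<Rightarrow> int^'d) \<Rightarrow> nat set set \<Rightarrow> (real^'d) set set" where
  "fan v T = {gen_cone (rv ` v ` F) | F. \<exists>S\<in>T. F \<subseteq> S}"

definition Kcone :: "(nat \<Rightarrow> int^'d) \<Rightarrow> nat \<Rightarrow> (real^'d) set" where
  "Kcone v n = {c *\<^sub>R x | c x. 0 \<le> c \<and> x \<in> convex hull (rv ` v ` {..<n})}"

definition ray :: "(nat \<Rightarrow> int^'d) \<Rightarrow> nat \<Rightarrow> (real^'d) set" where
  "ray v j = {c *\<^sub>R rv (v j) | c. 0 \<le> c}"

definition same_cone :: "(nat \<Rightarrow> int^'d) \<Rightarrow> nat set set \<Rightarrow> int^'d \<Rightarrow> int^'d \<Rightarrow> bool" where
  "same_cone v T a b \<longleftrightarrow> (\<exists>C\<in>fan v T. rv a \<in> C \<and> rv b \<in> C)"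

text \<open>Elements of C[K,Sigma] are finitely supported functions N -> C (supported in K);
  x^w is xmon w; multiplication is the deformed product.\<close>
definition xmon :: "int^'d \<Rightarrow> (int^'d \<Rightarrow> complex)" where
  "xmon w = (\<lambda>u. if u = w then 1 else 0)"

definition rmult :: "(nat \<Rightarrow> int^'d) \<Rightarrow> nat set set \<Rightarrow>
    (int^'d \<Rightarrow> complex) \<Rightarrow> (int^'d \<Rightarrow> complex) \<Rightarrow> (int^'d \<Rightarrow> complex)" where
  "rmult v T f g = (\<lambda>u. \<Sum>p\<in>{(a, b). f a \<noteq> 0 \<and> g b \<noteq> 0 \<and> a + b = u \<and> same_cone v T a b}.
                       f (fst p) * g (snd p))"

inductive_set Rsub :: "(nat \<Rightarrow> int^'d) \<Rightarrow> nat \<Rightarrow> nat set set \<Rightarrow> (int^'d \<Rightarrow> complex) set"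
  for v n T where
  one: "xmon 0 \<in> Rsub v n T"
| gen: "j < n \<Longrightarrow> ray v j \<in> fan v T \<Longrightarrow> xmon (v j) \<in> Rsub v n T"
| add: "f \<in> Rsub v n T \<Longrightarrow> g \<in> Rsub v n T \<Longrightarrow> (\<lambda>u. f u + g u) \<in> Rsub v n T"
| scal: "f \<in> Rsub v n T \<Longrightarrow> (\<lambda>u. c * f u) \<in> Rsub v n T"
| mult: "f \<in> Rsub v n T \<Longrightarrow> g \<in> Rsub v n T \<Longrightarrow> rmult v T f g \<in> Rsub v n T"

definition Box :: "(nat \<Rightarrow> int^'d) \<Rightarrow> nat set set \<Rightarrow> (int^'d) set" where
  "Box v T = {b. \<exists>S\<in>T. \<exists>q :: nat \<Rightarrow> real. (\<forall>j. 0 \<le> q j \<and> q j < 1) \<and>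
      rv b = (\<Sum>j\<in>S. q j *\<^sub>R rv (v j))}"

definition sigma :: "(nat \<Rightarrow> int^'d) \<Rightarrow> nat set set \<Rightarrow> int^'d \<Rightarrow> (real^'d) set" where
  "sigma v T b = (THE C. C \<in> fan v T \<and> rv b \<in> C \<and> (\<forall>C'\<in>fan v T. rv b \<in> C' \<longrightarrow> C \<subseteq> C'))"

definition Mgens :: "(nat \<Rightarrow> int^'d) \<Rightarrow> nat \<Rightarrow> nat set set \<Rightarrow> int^'d \<Rightarrow> (int^'d \<Rightarrow> complex) set" where
  "Mgens v n T \<beta> = {foldr (rmult v T)
        (map (\<lambda>j. xmon (v j)) (sorted_list_of_set
           {j. j < n \<and> r j < 0 \<and> ray v j \<in> fan v T \<and> \<not> (ray v j face_of sigma v T b)}))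
        (xmon b)
      | b r. b \<in> Box v T \<and> b + (\<Sum>j<n. r j *s v j) = \<beta> \<and>
             (\<forall>j<n. ray v j \<notin> fan v T \<longrightarrow> 0 \<le> r j)}"

inductive_set Mmod :: "(nat \<Rightarrow> int^'d) \<Rightarrow> nat \<Rightarrow> nat set set \<Rightarrow> int^'d \<Rightarrow> (int^'d \<Rightarrow> complex) set"
  for v n T \<beta> where
  zero: "(\<lambda>_. 0) \<in> Mmod v n T \<beta>"
| gen: "g \<in> Mgens v n T \<beta> \<Longrightarrow> g \<in> Mmod v n T \<beta>"
| add: "f \<in> Mmod v n T \<beta> \<Longrightarrow> g \<in> Mmod v n T \<beta> \<Longrightarrow> (\<lambda>u. f u + g u) \<in> Mmod v n T \<beta>"
| smult: "f \<in> Rsub v n T \<Longrightarrow> m \<in> Mmod v n T \<beta> \<Longrightarrow> rmult v T f m \<in> Mmod v n T \<beta>"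

end

theory Submission
  imports Defs
begin

text \<open>(\<open>\<Rightarrow>\<close>) Every monomial in the support of an element of \<open>M(\<beta>)\<close> is \<open>x\<^sup>u\<close> with
  \<open>u = a + b + \<Sum>\<^bsub>j\<in>J\<^esub> v\<^sub>j\<close>, where \<open>a \<in> \<nat>\<A>\<close>, \<open>b \<in> Box(\<Sigma>)\<close> and \<open>\<beta> = b + \<Sum> r\<^sub>j v\<^sub>j\<close>. Since \<open>P\<close>
  annihilates \<open>N / \<int>S\<close> for every simplex \<open>S\<close>, the point \<open>Pb\<close> has nonnegative integer
  coordinates in a cell containing \<open>b\<close>, and for large \<open>k\<close> every negative \<open>r\<^sub>j\<close> is absorbed in
  \<open>\<beta> - u + kPu\<close>: for \<open>j \<in> J\<close> by the extra summand \<open>v\<^sub>j\<close> of \<open>u\<close>, and otherwise because \<open>v\<^sub>j\<close>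
  spans a ray of \<open>\<sigma>(b)\<close> and therefore has a positive coordinate in \<open>Pb\<close>. That \<open>\<sigma>(b)\<close> is the
  cone over the support of the coordinates of \<open>b\<close> in any cell containing \<open>b\<close> is where the
  regularity of the triangulation enters.

  (\<open>\<Leftarrow>\<close>) Write \<open>w\<close> in a cell \<open>S\<close>, subtract the integer parts of its coordinates to get
  \<open>b \<in> Box(\<Sigma>)\<close>, and read off \<open>r\<close> from expressions of \<open>\<beta> - w + kPw\<close> in \<open>\<nat>\<A>\<close> and of \<open>Pw\<close> in
  \<open>\<int>S\<close>. The generator of \<open>M(\<beta>)\<close> attached to \<open>(b, r)\<close> is then \<open>x\<^sup>u\<close> with
  \<open>u = b + \<Sum>\<^bsub>j\<in>J\<^esub> v\<^sub>j\<close> and \<open>J \<subseteq> S\<close>; every \<open>j \<in> J\<close> has positive integer part, so \<open>w - u\<close> is a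
  nonnegative integer combination of the \<open>v\<^sub>j\<close>, \<open>j \<in> S\<close>, and all products involved stay in
  the cone over \<open>S\<close>.\<close>

section \<open>Lattice coordinates\<close>

lemma rv_add [simp]: "rv (x + y) = rv x + rv y"
  and rv_diff [simp]: "rv (x - y) = rv x - rv y"
  and rv_zero [simp]: "rv 0 = 0"
  and rv_scale [simp]: "rv (c *s x) = of_int c *\<^sub>R rv x"
  and rv_eq_iff [simp]: "rv x = rv y \<longleftrightarrow> x = y"
  and rv_component [simp]: "rv x $ i = of_int (x $ i)"
  by (simp_all add: rv_def vec_eq_iff)

lemma rv_sum [simp]: "rv (sum f A) = (\<Sum>a\<in>A. rv (f a))"
  by (induction A rule: infinite_finite_induct) auto

interpretation int_vec: module "(*s) :: int \<Rightarrow> int^'d \<Rightarrow> int^'d"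
  by unfold_locales (simp_all add: vec_eq_iff algebra_simps)

lemma int_span_eq_span: "int_span X = int_vec.span X"
  unfolding int_span_def int_vec.span_explicit by blast

lemma sum_over_image_subset:
  assumes "inj_on v I" "F \<subseteq> v ` I" "finite I"
  shows "(\<Sum>x\<in>F. g x) = (\<Sum>j\<in>I. if v j \<in> F then g (v j) else 0)"
proof -
  have "(\<Sum>x\<in>F. g x) = (\<Sum>x\<in>v ` I. if x \<in> F then g x else 0)"
    using assms by (simp add: sum.If_cases Int_absorb1)
  also have "\<dots> = (\<Sum>j\<in>I. if v j \<in> F then g (v j) else 0)"
    using assms(1) by (simp add: sum.reindex)
  finally show ?thesis .
qed

lemma int_span_iff_coeffs:
  assumes "inj_on v I" "finite I"
  shows "y \<in> int_span (v ` I) \<longleftrightarrow> (\<exists>e. y = (\<Sum>j\<in>I. e j *s v j))"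
proof
  assume "y \<in> int_span (v ` I)"
  then obtain F c where "finite F" "F \<subseteq> v ` I" "y = (\<Sum>x\<in>F. c x *s x)"
    unfolding int_span_def by blast
  then have "y = (\<Sum>j\<in>I. (if v j \<in> F then c (v j) else 0) *s v j)"
    using assms by (auto simp: sum_over_image_subset intro!: sum.cong)
  then show "\<exists>e. y = (\<Sum>j\<in>I. e j *s v j)"
    by (rule exI[of _ "\<lambda>j. if v j \<in> F then c (v j) else 0"])
next
  assume "\<exists>e. y = (\<Sum>j\<in>I. e j *s v j)"
  then obtain e where "y = (\<Sum>j\<in>I. e j *s v j)" ..
  define c where "c x = e (the_inv_into I v x)" for x
  have "y = (\<Sum>x\<in>v ` I. c x *s x)"
    using assms(1) \<open>y = _\<close> by (simp add: sum.reindex c_def the_inv_into_f_f)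
  then show "y \<in> int_span (v ` I)"
    unfolding int_span_def using assms(2) by blast
qed

lemma nat_span_iff_coeffs:
  assumes "inj_on v I" "finite I"
  shows "y \<in> nat_span (v ` I) \<longleftrightarrow> (\<exists>e. y = (\<Sum>j\<in>I. int (e j) *s v j))"
proof
  assume "y \<in> nat_span (v ` I)"
  then obtain F c where "finite F" "F \<subseteq> v ` I" "y = (\<Sum>x\<in>F. int (c x) *s x)"
    unfolding nat_span_def by blast
  then have "y = (\<Sum>j\<in>I. int (if v j \<in> F then c (v j) else 0) *s v j)"
    using assms by (auto simp: sum_over_image_subset intro!: sum.cong)
  then show "\<exists>e. y = (\<Sum>j\<in>I. int (e j) *s v j)"
    by (rule exI[of _ "\<lambda>j. if v j \<in> F then c (v j) else 0"])
next
  assume "\<exists>e. y = (\<Sum>j\<in>I. int (e j) *s v j)"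
  then obtain e where "y = (\<Sum>j\<in>I. int (e j) *s v j)" ..
  define c where "c x = e (the_inv_into I v x)" for x
  have "y = (\<Sum>x\<in>v ` I. int (c x) *s x)"
    using assms(1) \<open>y = _\<close> by (simp add: sum.reindex c_def the_inv_into_f_f)
  then show "y \<in> nat_span (v ` I)"
    unfolding nat_span_def using assms(2) by blast
qed

lemma nat_span_add:
  assumes "inj_on v I" "finite I" "x \<in> nat_span (v ` I)" "y \<in> nat_span (v ` I)"
  shows "x + y \<in> nat_span (v ` I)"
proof -
  obtain c d where "x = (\<Sum>j\<in>I. int (c j) *s v j)" "y = (\<Sum>j\<in>I. int (d j) *s v j)"
    using assms unfolding nat_span_iff_coeffs[OF assms(1,2)] by blast
  then show ?thesis
    unfolding nat_span_iff_coeffs[OF assms(1,2)]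
    by (intro exI[of _ "\<lambda>j. c j + d j"]) (simp add: vector_sadd_rdistrib sum.distrib)
qed

lemma nat_span_scale:
  assumes "inj_on v I" "finite I" "x \<in> nat_span (v ` I)"
  shows "int m *s x \<in> nat_span (v ` I)"
proof -
  obtain c where "x = (\<Sum>j\<in>I. int (c j) *s v j)"
    using assms unfolding nat_span_iff_coeffs[OF assms(1,2)] by blast
  then show ?thesis
    unfolding nat_span_iff_coeffs[OF assms(1,2)]
    by (intro exI[of _ "\<lambda>j. m * c j"]) (simp add: vec_eq_iff sum_distrib_left sum_component mult.assoc)
qed

lemma nonneg_comb_in_nat_span:
  assumes "inj_on v I" "finite I" "\<forall>j\<in>I. 0 \<le> c j"
  shows "(\<Sum>j\<in>I. c j *s v j) \<in> nat_span (v ` I)"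
  unfolding nat_span_iff_coeffs[OF assms(1,2)] using assms(3)
  by (intro exI[of _ "\<lambda>j. nat (c j)"] sum.cong) auto

lemma additive_int_scale:
  fixes h :: "int^'d \<Rightarrow> int"
  assumes "Modules.additive h"
  shows "h (c *s x) = c * h x"
proof (induction c rule: int_induct[where k = 0])
  case base
  show ?case using additive.zero[OF assms] by (simp add: vec_eq_iff)
next
  case (step1 c)
  have "(c + 1) *s x = c *s x + x" by (simp add: vec_eq_iff algebra_simps)
  then show ?case using step1 additive.add[OF assms] by (simp add: algebra_simps)
next
  case (step2 c)
  have "(c - 1) *s x = c *s x - x" by (simp add: vec_eq_iff algebra_simps)
  then show ?case using step2 additive.diff[OF assms] by (simp add: algebra_simps)
qed

lemma eq_if_parallel_same_height:
  fixes h :: "int^'d \<Rightarrow> int"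
  assumes h: "Modules.additive h" and par: "rv x = t *\<^sub>R rv y" and height: "h x = h y" "h y \<noteq> 0"
  shows "x = y"
proof -
  have comp: "real_of_int (x $ m) = t * of_int (y $ m)" for m
    using arg_cong[OF par, of "\<lambda>z. z $ m"] by simp
  have "y \<noteq> 0"
    using height(2) additive.zero[OF h] by auto
  then obtain l where l: "y $ l \<noteq> 0"
    by (metis vec_eq_iff zero_index)
  have "real_of_int (y $ l * x $ m) = of_int (x $ l * y $ m)" for m
    using comp[of m] comp[of l] by simp
  then have "(y $ l) *s x = (x $ l) *s y"
    unfolding of_int_eq_iff by (simp add: vec_eq_iff)
  then have "y $ l * h x = x $ l * h y"
    using additive_int_scale[OF h] by metis
  then have "x $ l = y $ l"
    using height by simp
  then have "t = 1"
    using comp[of l] l by simp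
  then show ?thesis
    using par by simp
qed

section \<open>The index of a sublattice\<close>

lemma sum_const_vec: "(\<Sum>a\<in>A. x) = int (card A) *s (x :: int^'d)"
  by (simp add: vec_eq_iff of_nat_index)

lemma coset_eq_iff:
  assumes "int_vec.subspace L"
  shows "(+) w ` L = (+) w' ` L \<longleftrightarrow> w - w' \<in> L"
proof
  assume "(+) w ` L = (+) w' ` L"
  moreover have "w \<in> (+) w ` L"
    using int_vec.subspace_0[OF assms] by force
  ultimately show "w - w' \<in> L" by auto
next
  assume diff: "w - w' \<in> L"
  have "(+) a ` L \<subseteq> (+) b ` L" if "a - b \<in> L" for a b
  proof
    fix y assume "y \<in> (+) a ` L"
    then obtain l where "l \<in> L" "y = b + ((a - b) + l)" by auto
    then show "y \<in> (+) b ` L"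
      using int_vec.subspace_add[OF assms that] by blast
  qed
  moreover have "w' - w \<in> L"
    using int_vec.subspace_neg[OF assms diff] by simp
  ultimately show "(+) w ` L = (+) w' ` L"
    using diff by blast
qed

text \<open>Translation by \<open>x\<close> permutes the cosets of \<open>L\<close>; summing the displacements of
  coset representatives under this permutation gives \<open>- [N : L] x \<in> L\<close>.\<close>
lemma lattice_index_scale_mem:
  assumes L: "int_vec.subspace L"
  shows "int (lattice_index L) *s x \<in> L"
proof -
  let ?cosets = "range (\<lambda>w. (+) w ` L)"
  let ?shift = "\<lambda>C. (+) x ` C"
  define rep where "rep C = (SOME w. C = (+) w ` L)" for C
  have rep: "C = (+) (rep C) ` L" if "C \<in> ?cosets" for C
  proof -
    from that obtain w where "C = (+) w ` L" by blast
    then show ?thesis unfolding rep_def by (rule someI)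
  qed
  have shift: "?shift ((+) w ` L) = (+) (x + w) ` L" for w
    by (simp add: image_image add.assoc)
  have "?shift ` ?cosets = ?cosets"
  proof
    show "?shift ` ?cosets \<subseteq> ?cosets"
      using shift by auto
    show "?cosets \<subseteq> ?shift ` ?cosets"
    proof
      fix C assume "C \<in> ?cosets"
      then obtain w where "C = (+) w ` L" by blast
      then have "C = ?shift ((+) (w - x) ` L)"
        by (simp add: shift)
      then show "C \<in> ?shift ` ?cosets" by blast
    qed
  qed
  moreover have "inj_on ?shift ?cosets"
    by (rule inj_onI) (simp add: inj_image_eq_iff)
  ultimately have reps_permuted: "(\<Sum>C\<in>?cosets. rep (?shift C)) = (\<Sum>C\<in>?cosets. rep C)"
    using sum.reindex[of ?shift ?cosets rep] by simp
  have "rep (?shift C) - (x + rep C) \<in> L" if "C \<in> ?cosets" for C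
  proof -
    have "?shift C \<in> ?cosets"
      using rep[OF that] shift by (metis rangeI)
    then have "(+) (rep (?shift C)) ` L = ?shift C"
      by (rule rep[symmetric])
    also have "\<dots> = (+) (x + rep C) ` L"
      using arg_cong[OF rep[OF that], of ?shift] shift by simp
    finally show ?thesis
      using coset_eq_iff[OF L] by blast
  qed
  then have "(\<Sum>C\<in>?cosets. rep (?shift C) - (x + rep C)) \<in> L"
    by (rule int_vec.subspace_sum[OF L])
  also have "(\<Sum>C\<in>?cosets. rep (?shift C) - (x + rep C)) = - (int (lattice_index L) *s x)"
    unfolding lattice_index_def sum_subtractf sum.distrib reps_permuted sum_const_vec by simp
  finally show ?thesis
    using int_vec.subspace_neg[OF L] by fastforce
qed

lemma finite_int_vectors_bounded: "finite {z::int^'d. \<forall>i. \<bar>z $ i\<bar> \<le> B i}"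
proof -
  have "{z::int^'d. \<forall>i. \<bar>z $ i\<bar> \<le> B i} \<subseteq> vec_lambda ` (PiE UNIV (\<lambda>i. {-B i..B i}))"
  proof
    fix z :: "int^'d" assume "z \<in> {z. \<forall>i. \<bar>z $ i\<bar> \<le> B i}"
    then have "vec_nth z \<in> PiE UNIV (\<lambda>i. {-B i..B i})"
      by (auto simp: abs_le_iff minus_le_iff)
    then show "z \<in> vec_lambda ` (PiE UNIV (\<lambda>i. {-B i..B i}))"
      by (metis image_eqI vec_nth_inverse)
  qed
  then show ?thesis
    by (rule finite_subset) (simp add: finite_PiE)
qed

text \<open>Every coset of a full-rank lattice has a representative with coordinates in
  \<open>[0, 1)\<close> with respect to the generators, and these lie in a bounded box.\<close>
lemma finite_cosets_full_rank:
  fixes X :: "(int^'d) set"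
  assumes fin: "finite X" and full: "span (rv ` X) = UNIV"
  shows "finite (range (\<lambda>w. (+) w ` int_span X))"
proof -
  let ?L = "int_span X"
  have L: "int_vec.subspace ?L"
    unfolding int_span_eq_span by (rule int_vec.subspace_span)
  define B where "B i = (\<Sum>x\<in>X. \<bar>x $ i\<bar>)" for i
  have reps: "\<exists>p\<in>{z. \<forall>i. \<bar>z $ i\<bar> \<le> B i}. w - p \<in> ?L" for w
  proof -
    have "rv w \<in> span (rv ` X)" using full by simp
    then obtain u where "rv w = (\<Sum>y\<in>rv ` X. u y *\<^sub>R y)"
      using fin by (auto simp: span_finite)
    then have c: "rv w = (\<Sum>x\<in>X. u (rv x) *\<^sub>R rv x)"
      by (simp add: sum.reindex inj_on_def)
    define p where "p = w - (\<Sum>x\<in>X. \<lfloor>u (rv x)\<rfloor> *s x)"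
    have in_L: "w - p \<in> ?L"
      unfolding p_def int_span_eq_span
      by (simp add: int_vec.span_sum int_vec.span_scale int_vec.span_base)
    have "rv p = (\<Sum>x\<in>X. frac (u (rv x)) *\<^sub>R rv x)"
      unfolding p_def frac_def by (simp add: c scaleR_diff_left sum_subtractf)
    have "\<bar>p $ i\<bar> \<le> B i" for i
    proof -
      have "real_of_int (p $ i) = (\<Sum>x\<in>X. frac (u (rv x)) * of_int (x $ i))"
        using arg_cong[OF \<open>rv p = _\<close>, of "\<lambda>y. y $ i"] by (simp add: sum_component)
      also have "\<bar>\<dots>\<bar> \<le> (\<Sum>x\<in>X. \<bar>of_int (x $ i)\<bar>)"
        by (rule order_trans[OF sum_abs sum_mono])
          (simp add: abs_mult frac_lt_1 less_imp_le mult_left_le_one_le)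
      finally show ?thesis
        unfolding B_def by (simp only: of_int_abs[symmetric] of_int_sum[symmetric] of_int_le_iff)
    qed
    with in_L show ?thesis by blast
  qed
  have "range (\<lambda>w. (+) w ` ?L) \<subseteq> (\<lambda>p. (+) p ` ?L) ` {z. \<forall>i. \<bar>z $ i\<bar> \<le> B i}"
  proof
    fix C assume "C \<in> range (\<lambda>w. (+) w ` ?L)"
    then obtain w where w: "C = (+) w ` ?L" by blast
    from reps obtain p where "p \<in> {z. \<forall>i. \<bar>z $ i\<bar> \<le> B i}" "w - p \<in> ?L" by blast
    then show "C \<in> (\<lambda>p. (+) p ` ?L) ` {z. \<forall>i. \<bar>z $ i\<bar> \<le> B i}"
      unfolding w coset_eq_iff[OF L, symmetric] by blast
  qed
  then show ?thesis
    by (rule finite_subset) (simp add: finite_int_vectors_bounded)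
qed

section \<open>The constant P\<close>

lemma independent_coords_unique:
  fixes f :: "'i \<Rightarrow> 'a::real_vector"
  assumes indep: "independent (f ` S)" and inj: "inj_on f S" and fin: "finite S"
    and eq: "(\<Sum>i\<in>S. a i *\<^sub>R f i) = (\<Sum>i\<in>S. b i *\<^sub>R f i)" and i: "i \<in> S"
  shows "a i = b i"
proof (rule ccontr)
  assume ne: "a i \<noteq> b i"
  define c where "c y = a (the_inv_into S f y) - b (the_inv_into S f y)" for y
  have "(\<Sum>y\<in>f ` S. c y *\<^sub>R y) = (\<Sum>i\<in>S. (a i - b i) *\<^sub>R f i)"
    using inj by (simp add: sum.reindex c_def the_inv_into_f_f)
  also have "\<dots> = 0"
    using eq by (simp add: scaleR_diff_left sum_subtractf)
  finally have "dependent (f ` S)"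
    unfolding real_vector.dependent_finite[OF finite_imageI[OF fin]]
    using i ne inj by (intro exI[of _ c]) (auto simp: c_def the_inv_into_f_f)
  with indep show False by simp
qed

lemma simplicesD:
  fixes v :: "nat \<Rightarrow> int^'d"
  assumes "S \<in> simplices v n"
  shows "S \<subseteq> {..<n}" "finite S" "card S = CARD('d)" "independent (rv ` v ` S)"
  using assms finite_subset[of S "{..<n}"] unfolding simplices_def by auto

lemma span_simplex:
  fixes v :: "nat \<Rightarrow> int^'d"
  assumes inj: "inj_on v {..<n}" and S: "S \<in> simplices v n"
  shows "span (rv ` v ` S) = UNIV"
proof -
  have "inj_on (rv \<circ> v) S"
    using inj simplicesD(1)[OF S] by (auto simp: inj_on_def)
  then have "card (rv ` v ` S) = CARD('d)"
    using simplicesD(3)[OF S] by (metis card_image image_comp)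
  then show ?thesis
    using card_ge_dim_independent[of "rv ` v ` S" UNIV] simplicesD(4)[OF S] by auto
qed

lemma finite_cosets_simplex:
  fixes v :: "nat \<Rightarrow> int^'d"
  assumes "inj_on v {..<n}" "S \<in> simplices v n"
  shows "finite (range (\<lambda>w. (+) w ` int_span (v ` S)))"
  using finite_cosets_full_rank span_simplex[OF assms] simplicesD(2)[OF assms(2)] by blast

lemma P_const_pos:
  fixes v :: "nat \<Rightarrow> int^'d"
  assumes inj: "inj_on v {..<n}"
  shows "0 < P_const v n"
proof -
  have "0 \<notin> (\<lambda>S. lattice_index (int_span (v ` S))) ` simplices v n"
    using finite_cosets_simplex[OF inj] unfolding lattice_index_def by auto
  moreover have "finite (simplices v n)"
    by (rule finite_subset[of _ "Pow {..<n}"]) (auto simp: simplices_def)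
  ultimately have "P_const v n \<noteq> 0"
    unfolding P_const_def by (auto simp: Lcm_0_iff_nat)
  then show ?thesis by simp
qed

lemma P_const_scale_mem_simplex:
  fixes v :: "nat \<Rightarrow> int^'d"
  assumes S: "S \<in> simplices v n"
  shows "int (P_const v n) *s x \<in> int_span (v ` S)"
proof -
  have "lattice_index (int_span (v ` S)) dvd P_const v n"
    unfolding P_const_def using S by (simp add: dvd_Lcm)
  then obtain m where m: "P_const v n = lattice_index (int_span (v ` S)) * m" ..
  have "int (lattice_index (int_span (v ` S))) *s x \<in> int_span (v ` S)"
    unfolding int_span_eq_span by (rule lattice_index_scale_mem[OF int_vec.subspace_span])
  then have "int m *s (int (lattice_index (int_span (v ` S))) *s x) \<in> int_span (v ` S)"
    unfolding int_span_eq_span by (rule int_vec.span_scale)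
  then show ?thesis
    by (simp add: m mult.commute)
qed

lemma P_const_times_simplex_coords:
  fixes v :: "nat \<Rightarrow> int^'d"
  assumes inj: "inj_on v {..<n}" and S: "S \<in> simplices v n"
    and x: "rv x = (\<Sum>j\<in>S. c j *\<^sub>R rv (v j))"
  obtains e where "int (P_const v n) *s x = (\<Sum>j\<in>S. e j *s v j)"
    and "\<And>j. j \<in> S \<Longrightarrow> of_int (e j) = real (P_const v n) * c j"
proof -
  have injS: "inj_on v S" and finS: "finite S"
    using inj simplicesD[OF S] inj_on_subset by blast+
  obtain e where e: "int (P_const v n) *s x = (\<Sum>j\<in>S. e j *s v j)"
    using P_const_scale_mem_simplex[OF S] int_span_iff_coeffs[OF injS finS] by blast
  have "(\<Sum>j\<in>S. of_int (e j) *\<^sub>R rv (v j)) = (\<Sum>j\<in>S. (real (P_const v n) * c j) *\<^sub>R rv (v j))"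
    using arg_cong[OF e, of rv] by (simp add: x scaleR_sum_right)
  then have "of_int (e j) = real (P_const v n) * c j" if "j \<in> S" for j
    using independent_coords_unique[of "\<lambda>j. rv (v j)" S] simplicesD(4)[OF S] injS finS that
    by (simp add: image_image inj_on_def)
  with e show ?thesis using that by blast
qed

section \<open>Cones of a regular triangulation\<close>

lemma sum_extend_zero_scaleR:
  fixes g :: "'i \<Rightarrow> 'a::real_vector"
  assumes "finite G" "F \<subseteq> G"
  shows "(\<Sum>i\<in>G. (if i \<in> F then c i else 0) *\<^sub>R g i) = (\<Sum>i\<in>F. c i *\<^sub>R g i)"
  by (rule sum.mono_neutral_cong_right[OF assms]) auto

lemma sum_extend_zero_vec:
  fixes g :: "'i \<Rightarrow> int^'d"
  assumes "finite G" "F \<subseteq> G"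
  shows "(\<Sum>i\<in>G. (if i \<in> F then c i else 0) *s g i) = (\<Sum>i\<in>F. c i *s g i)"
  by (rule sum.mono_neutral_cong_right[OF assms]) (auto simp: vec_eq_iff)

locale regular_fan =
  fixes v :: "nat \<Rightarrow> int^'d" and n :: nat and T :: "nat set set"
  assumes inj: "inj_on v {..<n}" and regular: "regular_triangulation v n T"
begin

abbreviation vr :: "nat \<Rightarrow> real^'d" where
  "vr j \<equiv> rv (v j)"

abbreviation cone_of :: "nat set \<Rightarrow> (real^'d) set" where
  "cone_of F \<equiv> gen_cone (rv ` v ` F)"

lemma cell_simplex: "S \<in> T \<Longrightarrow> S \<in> simplices v n"
  using regular unfolding regular_triangulation_def by blast

lemmas cellD = simplicesD[OF cell_simplex]

lemma inj_on_vr: "F \<subseteq> {..<n} \<Longrightarrow> inj_on vr F"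
  using inj by (auto simp: inj_on_def)

lemma coords_unique:
  assumes S: "S \<in> T" and F: "F \<subseteq> S"
    and eq: "(\<Sum>i\<in>F. a i *\<^sub>R vr i) = (\<Sum>i\<in>F. b i *\<^sub>R vr i)" and i: "i \<in> F"
  shows "a i = b i"
proof (rule independent_coords_unique[OF _ _ _ eq i])
  show "independent (vr ` F)"
    using independent_mono[OF cellD(4)[OF S] image_mono[OF image_mono[OF F]]]
    by (simp add: image_image)
  show "inj_on vr F" "finite F"
    using cellD(1,2)[OF S] F by (auto intro: inj_on_vr finite_subset)
qed

lemma mem_cone_of_iff:
  assumes F: "F \<subseteq> {..<n}" "finite F"
  shows "x \<in> cone_of F \<longleftrightarrow> (\<exists>c. (\<forall>i\<in>F. 0 \<le> c i) \<and> x = (\<Sum>i\<in>F. c i *\<^sub>R vr i))"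
proof
  note inj_F = inj_on_vr[OF F(1)]
  assume "x \<in> cone_of F"
  then obtain c where "\<forall>y\<in>vr ` F. 0 \<le> c y" "x = (\<Sum>y\<in>vr ` F. c y *\<^sub>R y)"
    unfolding gen_cone_def image_image by blast
  then show "\<exists>c. (\<forall>i\<in>F. 0 \<le> c i) \<and> x = (\<Sum>i\<in>F. c i *\<^sub>R vr i)"
    using inj_F by (intro exI[of _ "\<lambda>i. c (vr i)"]) (simp add: sum.reindex)
next
  note inj_F = inj_on_vr[OF F(1)]
  assume "\<exists>c. (\<forall>i\<in>F. 0 \<le> c i) \<and> x = (\<Sum>i\<in>F. c i *\<^sub>R vr i)"
  then obtain c where c: "\<forall>i\<in>F. 0 \<le> c i" "x = (\<Sum>i\<in>F. c i *\<^sub>R vr i)" by blast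
  define c' where "c' y = c (the_inv_into F vr y)" for y
  have "x = (\<Sum>y\<in>vr ` F. c' y *\<^sub>R y)" "\<forall>y\<in>vr ` F. 0 \<le> c' y"
    using c inj_F by (auto simp: sum.reindex c'_def the_inv_into_f_f[OF inj_F] intro!: sum.cong)
  then show "x \<in> cone_of F"
    unfolding gen_cone_def image_image by blast
qed

lemma cone_of_mono:
  assumes G: "G \<subseteq> {..<n}" "finite G" and "F \<subseteq> G"
  shows "cone_of F \<subseteq> cone_of G"
proof
  have F: "F \<subseteq> {..<n}" "finite F"
    using assms finite_subset by blast+
  fix x assume "x \<in> cone_of F"
  then obtain c where "\<forall>i\<in>F. 0 \<le> c i" "x = (\<Sum>i\<in>F. c i *\<^sub>R vr i)"
    unfolding mem_cone_of_iff[OF F] by blast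
  then show "x \<in> cone_of G"
    unfolding mem_cone_of_iff[OF G] sum_extend_zero_scaleR[OF G(2) \<open>F \<subseteq> G\<close>, symmetric]
    by (intro exI[of _ "\<lambda>i. if i \<in> F then c i else 0"]) simp
qed

lemma cone_of_add:
  assumes F: "F \<subseteq> {..<n}" "finite F" and "x \<in> cone_of F" "y \<in> cone_of F"
  shows "x + y \<in> cone_of F"
proof -
  obtain c d where "\<forall>i\<in>F. 0 \<le> c i" "x = (\<Sum>i\<in>F. c i *\<^sub>R vr i)"
    and "\<forall>i\<in>F. 0 \<le> d i" "y = (\<Sum>i\<in>F. d i *\<^sub>R vr i)"
    using assms(3,4) unfolding mem_cone_of_iff[OF F] by blast
  then show ?thesis
    unfolding mem_cone_of_iff[OF F]
    by (intro exI[of _ "\<lambda>i. c i + d i"]) (simp add: scaleR_add_left sum.distrib)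
qed

lemma vertex_in_cone_of:
  assumes F: "F \<subseteq> {..<n}" "finite F" and j: "j \<in> F"
  shows "vr j \<in> cone_of F"
  using j unfolding mem_cone_of_iff[OF F]
  by (intro exI[of _ "\<lambda>i. if i = j then 1 else 0"]) (simp add: if_distrib[of "\<lambda>c. c *\<^sub>R _"] F(2) cong: if_cong)

lemma ray_eq_cone_of: "ray v j = cone_of {j}"
  unfolding ray_def gen_cone_def by auto

lemma vertex_in_ray: "vr j \<in> ray v j"
  unfolding ray_def by (auto intro: exI[of _ 1])

lemma ray_in_fan: "S \<in> T \<Longrightarrow> j \<in> S \<Longrightarrow> ray v j \<in> fan v T"
  unfolding ray_eq_cone_of fan_def by blast

lemma cell_cone_in_fan: "S \<in> T \<Longrightarrow> cone_of S \<in> fan v T"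
  unfolding fan_def by blast

lemma nat_comb_in_cone_of:
  assumes S: "S \<in> T" and F: "F \<subseteq> S"
  shows "rv (\<Sum>j\<in>F. int (m j) *s v j) \<in> cone_of S"
  unfolding mem_cone_of_iff[OF cellD(1,2)[OF S]]
  using sum_extend_zero_scaleR[OF cellD(2)[OF S] F, of "\<lambda>j. real (m j)" vr]
  by (intro exI[of _ "\<lambda>j. if j \<in> F then real (m j) else 0"]) simp

lemma Kcone_cell_coords:
  assumes "rv w \<in> Kcone v n"
  obtains S c where "S \<in> T" "\<forall>j\<in>S. 0 \<le> c j" "rv w = (\<Sum>j\<in>S. c j *\<^sub>R vr j)"
proof -
  obtain t x where tx: "rv w = t *\<^sub>R x" "0 \<le> t" and "x \<in> convex hull (rv ` v ` {..<n})"
    using assms unfolding Kcone_def by blast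
  then obtain S where S: "S \<in> T" and "x \<in> convex hull (rv ` v ` S)"
    using regular unfolding regular_triangulation_def by blast
  then obtain u where u: "\<forall>y\<in>rv ` v ` S. 0 \<le> u y" "x = (\<Sum>y\<in>rv ` v ` S. u y *\<^sub>R y)"
    using cellD(2)[OF S] by (auto simp: convex_hull_finite)
  then have "x \<in> cone_of S"
    unfolding gen_cone_def by blast
  then obtain c where "\<forall>j\<in>S. 0 \<le> c j" "x = (\<Sum>j\<in>S. c j *\<^sub>R vr j)"
    unfolding mem_cone_of_iff[OF cellD(1,2)[OF S]] by blast
  then show ?thesis
    using that[OF S, of "\<lambda>j. t * c j"] tx by (simp add: scaleR_sum_right)
qed

definition lower_facet :: "(nat \<Rightarrow> real) \<Rightarrow> nat set \<Rightarrow> (real^'d \<Rightarrow> real) \<Rightarrow> bool" where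
  "lower_facet \<omega> S \<psi> \<longleftrightarrow>
     linear \<psi> \<and> (\<forall>j\<in>S. \<psi> (vr j) = \<omega> j) \<and> (\<forall>j\<in>{..<n} - S. \<psi> (vr j) < \<omega> j)"

lemma lower_facet_comb:
  assumes "lower_facet \<omega> S' \<psi>"
  shows "\<psi> (\<Sum>i\<in>S. c i *\<^sub>R vr i) = (\<Sum>i\<in>S. c i * \<psi> (vr i))"
  using assms unfolding lower_facet_def by (simp add: linear_sum linear_cmul)

lemma lower_facet_comb_eq:
  assumes "lower_facet \<omega> S \<psi>"
  shows "\<psi> (\<Sum>i\<in>S. c i *\<^sub>R vr i) = (\<Sum>i\<in>S. c i * \<omega> i)"
  using assms unfolding lower_facet_comb[OF assms] by (simp add: lower_facet_def)

lemma lower_facet_vertex_le: "lower_facet \<omega> S \<psi> \<Longrightarrow> j < n \<Longrightarrow> \<psi> (vr j) \<le> \<omega> j"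
  unfolding lower_facet_def by (cases "j \<in> S") (auto intro: less_imp_le)

lemma lower_facet_comb_le:
  assumes \<psi>: "lower_facet \<omega> S' \<psi>" and S: "S \<subseteq> {..<n}" and c: "\<forall>i\<in>S. 0 \<le> c i"
  shows "\<psi> (\<Sum>i\<in>S. c i *\<^sub>R vr i) \<le> (\<Sum>i\<in>S. c i * \<omega> i)"
  unfolding lower_facet_comb[OF \<psi>]
  using lower_facet_vertex_le[OF \<psi>] S c by (intro sum_mono mult_left_mono) auto

lemma lower_facet_comb_less:
  assumes \<psi>: "lower_facet \<omega> S' \<psi>" and S: "S \<subseteq> {..<n}" "finite S" and c: "\<forall>i\<in>S. 0 \<le> c i"
    and i: "i \<in> S - S'" "0 < c i"
  shows "\<psi> (\<Sum>i\<in>S. c i *\<^sub>R vr i) < (\<Sum>i\<in>S. c i * \<omega> i)"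
  unfolding lower_facet_comb[OF \<psi>]
proof (rule sum_strict_mono_ex1[OF S(2)])
  show "\<forall>j\<in>S. c j * \<psi> (vr j) \<le> c j * \<omega> j"
    using lower_facet_vertex_le[OF \<psi>] S c by (auto intro: mult_left_mono)
  have "\<psi> (vr i) < \<omega> i"
    using \<psi> S i unfolding lower_facet_def by blast
  then show "\<exists>j\<in>S. c j * \<psi> (vr j) < c j * \<omega> j"
    using i by (intro bexI[of _ i]) auto
qed

text \<open>If the support in \<open>S\<close> were not contained in \<open>S'\<close>, the lifting functionals of \<open>S\<close>
  and \<open>S'\<close> would assign strictly different heights to the common point.\<close>
lemma cell_support_subset:
  assumes S: "S \<in> T" and S': "S' \<in> T"
    and c: "\<forall>i\<in>S. 0 \<le> c i" and d: "\<forall>i\<in>S'. 0 \<le> d i"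
    and eq: "(\<Sum>i\<in>S. c i *\<^sub>R vr i) = (\<Sum>i\<in>S'. d i *\<^sub>R vr i)"
    and i: "i \<in> S" "0 < c i"
  shows "i \<in> S'"
proof (rule ccontr)
  assume "i \<notin> S'"
  obtain \<omega> where "\<forall>S\<in>T. \<exists>\<psi>. lower_facet \<omega> S \<psi>"
    using conjunct2[OF conjunct2[OF regular[unfolded regular_triangulation_def]]]
    unfolding lower_facet_def by blast
  then obtain \<psi> \<psi>' where \<psi>: "lower_facet \<omega> S \<psi>" and \<psi>': "lower_facet \<omega> S' \<psi>'"
    using S S' by blast
  have "\<psi>' (\<Sum>i\<in>S. c i *\<^sub>R vr i) < (\<Sum>i\<in>S. c i * \<omega> i)"
    using lower_facet_comb_less[OF \<psi>' cellD(1,2)[OF S] c] i \<open>i \<notin> S'\<close> by blast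
  also have "\<dots> = \<psi> (\<Sum>i\<in>S'. d i *\<^sub>R vr i)"
    unfolding eq[symmetric] lower_facet_comb_eq[OF \<psi>] ..
  also have "\<dots> \<le> (\<Sum>i\<in>S'. d i * \<omega> i)"
    by (rule lower_facet_comb_le[OF \<psi> cellD(1)[OF S'] d])
  also have "\<dots> = \<psi>' (\<Sum>i\<in>S. c i *\<^sub>R vr i)"
    unfolding eq lower_facet_comb_eq[OF \<psi>'] ..
  finally show False by simp
qed

lemma cell_coords_agree:
  assumes S: "S \<in> T" and S': "S' \<in> T"
    and c: "\<forall>i\<in>S. 0 \<le> c i" and d: "\<forall>i\<in>S'. 0 \<le> d i"
    and eq: "(\<Sum>i\<in>S. c i *\<^sub>R vr i) = (\<Sum>i\<in>S'. d i *\<^sub>R vr i)"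
    and i: "i \<in> S"
  shows "c i = (if i \<in> S' then d i else 0)"
proof (rule coords_unique[OF S order_refl _ i])
  have "d j = 0" if "j \<in> S'" "j \<notin> S" for j
    using cell_support_subset[OF S' S d c eq[symmetric] that(1)] d that by force
  then have "(\<Sum>i\<in>S'. d i *\<^sub>R vr i) = (\<Sum>i\<in>S' \<inter> S. d i *\<^sub>R vr i)"
    by (intro sum.mono_neutral_right) (auto simp: cellD(2)[OF S'])
  also have "\<dots> = (\<Sum>i\<in>S. (if i \<in> S' then d i else 0) *\<^sub>R vr i)"
    by (intro sum.mono_neutral_cong_left) (auto simp: cellD(2)[OF S])
  finally show "(\<Sum>i\<in>S. c i *\<^sub>R vr i) = (\<Sum>i\<in>S. (if i \<in> S' then d i else 0) *\<^sub>R vr i)"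
    using eq by simp
qed

lemma sigma_eq_support_cone:
  assumes S: "S \<in> T" and q: "\<forall>i\<in>S. 0 \<le> q i" and b: "rv b = (\<Sum>i\<in>S. q i *\<^sub>R vr i)"
  shows "sigma v T b = cone_of {i\<in>S. 0 < q i}"
proof -
  let ?F = "{i\<in>S. 0 < q i}"
  have F: "?F \<subseteq> {..<n}" "finite ?F"
    using cellD(1,2)[OF S] by auto
  have in_fan: "cone_of ?F \<in> fan v T"
    unfolding fan_def using S by blast
  have "rv b = (\<Sum>i\<in>?F. q i *\<^sub>R vr i)"
    unfolding b using q by (intro sum.mono_neutral_right) (auto simp: cellD(2)[OF S] order.order_iff_strict)
  then have mem: "rv b \<in> cone_of ?F"
    unfolding mem_cone_of_iff[OF F] by (intro exI[of _ q]) auto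
  have least: "cone_of ?F \<subseteq> C" if C: "C \<in> fan v T" "rv b \<in> C" for C
  proof -
    obtain F' S' where C_eq: "C = cone_of F'" and S': "S' \<in> T" "F' \<subseteq> S'"
      using C(1) unfolding fan_def by blast
    have F': "F' \<subseteq> {..<n}" "finite F'"
      using cellD(1,2)[OF S'(1)] S'(2) finite_subset by blast+
    obtain c where c: "\<forall>i\<in>F'. 0 \<le> c i" "rv b = (\<Sum>i\<in>F'. c i *\<^sub>R vr i)"
      using C(2) unfolding C_eq mem_cone_of_iff[OF F'] by blast
    have "?F \<subseteq> F'"
    proof
      fix i assume "i \<in> ?F"
      then have i: "i \<in> S" "0 < q i" by auto
      have eq: "(\<Sum>i\<in>S. q i *\<^sub>R vr i) = (\<Sum>i\<in>S'. (if i \<in> F' then c i else 0) *\<^sub>R vr i)"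
        unfolding b[symmetric] c(2) sum_extend_zero_scaleR[OF cellD(2)[OF S'(1)] S'(2)] ..
      have "q i = (if i \<in> S' then (if i \<in> F' then c i else 0) else 0)"
        by (rule cell_coords_agree[OF S S'(1) q _ eq i(1)]) (use c(1) in auto)
      then show "i \<in> F'"
        using i by (auto split: if_splits)
    qed
    then show ?thesis
      unfolding C_eq by (rule cone_of_mono[OF F'])
  qed
  show ?thesis
    unfolding sigma_def
  proof (rule the_equality)
    show "cone_of ?F \<in> fan v T \<and> rv b \<in> cone_of ?F \<and> (\<forall>C'\<in>fan v T. rv b \<in> C' \<longrightarrow> cone_of ?F \<subseteq> C')"
      using in_fan mem least by blast
    show "C = cone_of ?F" if "C \<in> fan v T \<and> rv b \<in> C \<and> (\<forall>C'\<in>fan v T. rv b \<in> C' \<longrightarrow> C \<subseteq> C')" for C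
      using that in_fan mem least by blast
  qed
qed

lemma convex_ray: "convex (ray v j)"
proof -
  have "ray v j = (\<lambda>c. c *\<^sub>R vr j) ` {0..}"
    unfolding ray_def by auto
  then show ?thesis
    by (auto intro!: convex_linear_image bounded_linear.linear[OF bounded_linear_scaleR_left])
qed

lemma comb_in_ray_if_single_support:
  assumes F: "finite F" "j \<in> F" and c: "\<forall>i\<in>F. 0 \<le> c i" "\<forall>i\<in>F - {j}. c i = 0"
  shows "(\<Sum>i\<in>F. c i *\<^sub>R vr i) \<in> ray v j"
proof -
  have "(\<Sum>i\<in>F. c i *\<^sub>R vr i) = (\<Sum>i\<in>F. (if i \<in> {j} then c j else 0) *\<^sub>R vr i)"
    using c(2) by (auto intro: sum.cong)
  also have "\<dots> = c j *\<^sub>R vr j"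
    using sum_extend_zero_scaleR[OF F(1), of "{j}"] F(2) by simp
  finally show ?thesis
    unfolding ray_def using c(1) F(2) by blast
qed

lemma ray_face_of_cone_of:
  assumes S: "S \<in> T" and F: "F \<subseteq> S" and j: "j \<in> F"
  shows "ray v j face_of cone_of F"
proof -
  have F': "F \<subseteq> {..<n}" "finite F"
    using cellD(1,2)[OF S] F finite_subset by blast+
  have "ray v j \<subseteq> cone_of F"
    unfolding ray_eq_cone_of using F' j by (intro cone_of_mono) auto
  moreover have "a \<in> ray v j \<and> b \<in> ray v j"
    if ab: "a \<in> cone_of F" "b \<in> cone_of F" and x: "x \<in> ray v j" "x \<in> open_segment a b" for a b x
  proof -
    obtain \<alpha> \<beta> where \<alpha>: "\<forall>i\<in>F. 0 \<le> \<alpha> i" "a = (\<Sum>i\<in>F. \<alpha> i *\<^sub>R vr i)"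
      and \<beta>: "\<forall>i\<in>F. 0 \<le> \<beta> i" "b = (\<Sum>i\<in>F. \<beta> i *\<^sub>R vr i)"
      using ab unfolding mem_cone_of_iff[OF F'] by blast
    obtain t where t: "0 \<le> t" "x = t *\<^sub>R vr j"
      using x(1) unfolding ray_def by blast
    obtain u where u: "0 < u" "u < 1" "x = (1 - u) *\<^sub>R a + u *\<^sub>R b"
      using x(2) unfolding in_segment by blast
    have "(\<Sum>i\<in>F. ((1 - u) * \<alpha> i + u * \<beta> i) *\<^sub>R vr i) = x"
      using u(3) \<alpha>(2) \<beta>(2) by (simp add: scaleR_add_left sum.distrib scaleR_sum_right)
    also have "\<dots> = (\<Sum>i\<in>F. (if i \<in> {j} then t else 0) *\<^sub>R vr i)"
      using sum_extend_zero_scaleR[OF F'(2), of "{j}" "\<lambda>_. t" vr] j t(2) by simp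
    finally have same_coords:
      "(\<Sum>i\<in>F. ((1 - u) * \<alpha> i + u * \<beta> i) *\<^sub>R vr i) = (\<Sum>i\<in>F. (if i \<in> {j} then t else 0) *\<^sub>R vr i)" .
    have "(1 - u) * \<alpha> i + u * \<beta> i = 0" if "i \<in> F - {j}" for i
      using coords_unique[OF S F same_coords, of i] that by simp
    then have "\<alpha> i = 0 \<and> \<beta> i = 0" if "i \<in> F - {j}" for i
      using that \<alpha>(1) \<beta>(1) u(1,2) by (smt (verit, best) DiffD1 mult_nonneg_nonneg mult_pos_pos)
    then show ?thesis
      unfolding \<alpha>(2) \<beta>(2) using comb_in_ray_if_single_support[OF F'(2) j] \<alpha>(1) \<beta>(1) by blast
  qed
  ultimately show ?thesis
    unfolding face_of_def using convex_ray by blast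
qed

end

locale graded_regular_fan = regular_fan v n T
  for v :: "nat \<Rightarrow> int^'d" and n T +
  fixes h :: "int^'d \<Rightarrow> int"
  assumes additive_h: "Modules.additive h" and h_vertex: "\<And>j. j < n \<Longrightarrow> h (v j) = 1"
begin

lemma vertex_in_cell_if_ray_in_fan:
  assumes j: "j < n" and ray: "ray v j \<in> fan v T"
  obtains S where "S \<in> T" "j \<in> S"
proof -
  obtain F S where F_ray: "ray v j = cone_of F" and S: "S \<in> T" "F \<subseteq> S"
    using ray unfolding fan_def by blast
  have F: "F \<subseteq> {..<n}" "finite F"
    using cellD(1,2)[OF S(1)] S(2) finite_subset by blast+
  have "vr j \<in> ray v j"
    by (rule vertex_in_ray)
  moreover have "vr j \<noteq> 0"
    using h_vertex[OF j] additive.zero[OF additive_h] by (metis rv_eq_iff rv_zero zero_neq_one)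
  ultimately obtain i where i: "i \<in> F"
    unfolding F_ray mem_cone_of_iff[OF F] by fastforce
  then have "vr i \<in> ray v j"
    unfolding F_ray by (rule vertex_in_cone_of[OF F])
  then obtain t where "vr i = t *\<^sub>R vr j"
    unfolding ray_def by blast
  then have "v i = v j"
    using eq_if_parallel_same_height[OF additive_h] h_vertex j i F(1) by fastforce
  then have "i = j"
    using inj i F(1) j by (auto dest: inj_onD)
  with i S that show ?thesis by blast
qed

lemma ray_face_of_sigma_iff:
  assumes S: "S \<in> T" and q: "\<forall>i\<in>S. 0 \<le> q i" and b: "rv b = (\<Sum>i\<in>S. q i *\<^sub>R vr i)"
    and j: "j < n" "ray v j \<in> fan v T"
  shows "ray v j face_of sigma v T b \<longleftrightarrow> j \<in> S \<and> 0 < q j"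
proof
  let ?F = "{i\<in>S. 0 < q i}"
  have F: "?F \<subseteq> {..<n}" "finite ?F"
    using cellD(1,2)[OF S] by auto
  assume "ray v j face_of sigma v T b"
  then have "vr j \<in> cone_of ?F"
    using vertex_in_ray face_of_imp_subset unfolding sigma_eq_support_cone[OF S q b] by blast
  then obtain c where c: "\<forall>i\<in>?F. 0 \<le> c i" "vr j = (\<Sum>i\<in>?F. c i *\<^sub>R vr i)"
    unfolding mem_cone_of_iff[OF F] by blast
  obtain S' where S': "S' \<in> T" "j \<in> S'"
    using vertex_in_cell_if_ray_in_fan[OF j] by blast
  have "(\<Sum>i\<in>S'. (if i \<in> {j} then 1 else 0) *\<^sub>R vr i) = vr j"
    using sum_extend_zero_scaleR[OF cellD(2)[OF S'(1)], of "{j}" "\<lambda>_. 1" vr] S'(2) by simp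
  also have "\<dots> = (\<Sum>i\<in>S. (if i \<in> ?F then c i else 0) *\<^sub>R vr i)"
    using sum_extend_zero_scaleR[OF cellD(2)[OF S], of ?F c vr] c(2) by auto
  finally have same_point:
    "(\<Sum>i\<in>S'. (if i \<in> {j} then 1 else 0) *\<^sub>R vr i) = (\<Sum>i\<in>S. (if i \<in> ?F then c i else 0) *\<^sub>R vr i)" .
  have "(if j \<in> {j} then 1 else 0) = (if j \<in> S then (if j \<in> ?F then c j else 0) else 0)"
    by (rule cell_coords_agree[OF S'(1) S _ _ same_point S'(2)]) (use c(1) in auto)
  then show "j \<in> S \<and> 0 < q j"
    by (auto split: if_splits)
next
  assume "j \<in> S \<and> 0 < q j"
  then show "ray v j face_of sigma v T b"
    unfolding sigma_eq_support_cone[OF S q b] by (intro ray_face_of_cone_of[OF S]) auto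
qed

end

section \<open>Monomials of M(\<beta>)\<close>

lemma xmon_nonzero_iff [simp]: "xmon a u \<noteq> 0 \<longleftrightarrow> u = a"
  by (simp add: xmon_def)

lemma rmult_xmon:
  assumes "same_cone v T a b"
  shows "rmult v T (xmon a) (xmon b) = xmon (a + b)"
proof
  fix u
  have "{(a', b'). xmon a a' \<noteq> 0 \<and> xmon b b' \<noteq> 0 \<and> a' + b' = u \<and> same_cone v T a' b'}
      = (if a + b = u then {(a, b)} else {})"
    using assms by auto
  then show "rmult v T (xmon a) (xmon b) u = xmon (a + b) u"
    by (simp add: rmult_def xmon_def)
qed

lemma rmult_nonzero_imp:
  assumes "rmult v T f g u \<noteq> 0"
  obtains a b where "f a \<noteq> 0" "g b \<noteq> 0" "u = a + b"
  using sum.not_neutral_contains_not_neutral[OF assms[unfolded rmult_def]] that by auto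

lemma foldr_rmult_xmon_support:
  assumes "foldr (rmult v T) (map (\<lambda>j. xmon (v j)) js) (xmon b) u \<noteq> 0"
  shows "u = b + sum_list (map v js)"
  using assms
proof (induction js arbitrary: u)
  case (Cons j js)
  then obtain a c where "a = v j" "foldr (rmult v T) (map (\<lambda>j. xmon (v j)) js) (xmon b) c \<noteq> 0" "u = a + c"
    by (auto elim: rmult_nonzero_imp)
  with Cons.IH show ?case by (simp add: algebra_simps)
qed simp

lemma generator_shift_coeffs:
  fixes v :: "nat \<Rightarrow> int^'d"
  assumes \<beta>: "b + (\<Sum>j<n. r j *s v j) = \<beta>" and e: "int P *s b = (\<Sum>j\<in>S. e j *s v j)"
    and J: "J \<subseteq> {..<n}" and S: "S \<subseteq> {..<n}"
  shows "\<beta> - (b + (\<Sum>j\<in>J. v j)) + int (k * P) *s (b + (\<Sum>j\<in>J. v j)) =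
    (\<Sum>j<n. (r j + (if j \<in> J then int (k * P) - 1 else 0) + (if j \<in> S then int k * e j else 0)) *s v j)"
proof -
  have "(\<Sum>j<n. (r j + (if j \<in> J then int (k * P) - 1 else 0) + (if j \<in> S then int k * e j else 0)) *s v j)
      = (\<Sum>j<n. r j *s v j) + (\<Sum>j\<in>J. (int (k * P) - 1) *s v j) + (\<Sum>j\<in>S. (int k * e j) *s v j)"
    unfolding vector_sadd_rdistrib sum.distrib by (simp add: sum_extend_zero_vec J S)
  also have "\<dots> = (\<Sum>j<n. r j *s v j) + (int (k * P) - 1) *s (\<Sum>j\<in>J. v j) + int k *s (int P *s b)"
    unfolding e by (simp add: sum_cmul[symmetric])
  also have "\<dots> = \<beta> - (b + (\<Sum>j\<in>J. v j)) + int (k * P) *s (b + (\<Sum>j\<in>J. v j))"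
    unfolding \<beta>[symmetric] by (simp add: vec_eq_iff algebra_simps)
  finally show ?thesis ..
qed

lemma box_part_shift_eq:
  fixes v :: "nat \<Rightarrow> int^'d"
  assumes a: "\<beta> - w + int (k * P) *s w = (\<Sum>j<n. int (a j) *s v j)"
    and e: "int P *s w = (\<Sum>j\<in>S. e j *s v j)" and S: "S \<subseteq> {..<n}"
  shows "w - (\<Sum>j\<in>S. f j *s v j) + (\<Sum>j<n. (int (a j) + (if j \<in> S then f j - int k * e j else 0)) *s v j) = \<beta>"
proof -
  have "(\<Sum>j<n. (int (a j) + (if j \<in> S then f j - int k * e j else 0)) *s v j)
      = (\<Sum>j<n. int (a j) *s v j) + (\<Sum>j\<in>S. (f j - int k * e j) *s v j)"
    unfolding vector_sadd_rdistrib sum.distrib by (simp add: sum_extend_zero_vec[OF finite_lessThan S])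
  also have "\<dots> = \<beta> - w + int (k * P) *s w + (\<Sum>j\<in>S. f j *s v j) - int k *s (int P *s w)"
    unfolding a e by (simp add: vector_sub_rdistrib sum_subtractf sum_cmul[symmetric])
  finally show ?thesis
    by (simp add: vec_eq_iff algebra_simps)
qed

lemma sum_lowered_parts_eq:
  fixes v :: "nat \<Rightarrow> int^'d"
  assumes S: "finite S" and J: "J \<subseteq> S" and f: "\<forall>j\<in>S. 0 \<le> f j" "\<forall>j\<in>J. 1 \<le> f j"
  shows "(\<Sum>j\<in>S. int (nat (f j - (if j \<in> J then 1 else 0))) *s v j) + (w - (\<Sum>j\<in>S. f j *s v j) + (\<Sum>j\<in>J. v j)) = w"
proof -
  have "(\<Sum>j\<in>S. int (nat (f j - (if j \<in> J then 1 else 0))) *s v j)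
      = (\<Sum>j\<in>S. f j *s v j - (if j \<in> J then 1 else 0) *s v j)"
    using f J by (intro sum.cong) (auto simp: vec_eq_iff algebra_simps)
  also have "\<dots> = (\<Sum>j\<in>S. f j *s v j) - (\<Sum>j\<in>J. v j)"
    using sum_extend_zero_vec[OF S J, of "\<lambda>_. 1" v] by (simp add: sum_subtractf vec_eq_iff)
  finally show ?thesis by simp
qed

context regular_fan
begin

lemma Rsub_support:
  assumes "f \<in> Rsub v n T" "f u \<noteq> 0"
  shows "u \<in> nat_span (v ` {..<n})"
  using assms
proof (induction arbitrary: u rule: Rsub.induct)
  case one
  then show ?case
    using nonneg_comb_in_nat_span[OF inj finite_lessThan, of "\<lambda>_. 0"] by simp
next
  case (gen j)
  then have "u = (\<Sum>i<n. (if i \<in> {j} then 1 else 0) *s v i)"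
    using sum_extend_zero_vec[of "{..<n}" "{j}" "\<lambda>_. 1" v] by (simp add: vec_eq_iff)
  then show ?case
    using nonneg_comb_in_nat_span[OF inj finite_lessThan] by simp
next
  case (add f g)
  then show ?case by (cases "f u = 0") auto
next
  case (mult f g)
  then show ?case
    using nat_span_add[OF inj finite_lessThan] by (metis rmult_nonzero_imp)
qed auto

definition admissible :: "int^'d \<Rightarrow> int^'d \<Rightarrow> bool" where
  "admissible \<beta> u \<longleftrightarrow> (\<exists>k>0. \<beta> - u + int (k * P_const v n) *s u \<in> nat_span (v ` {..<n}))"

lemma admissible_add_nat_span:
  assumes adm: "admissible \<beta> u" and a: "a \<in> nat_span (v ` {..<n})"
  shows "admissible \<beta> (a + u)"
proof -
  obtain k where k: "0 < k" and mem: "\<beta> - u + int (k * P_const v n) *s u \<in> nat_span (v ` {..<n})"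
    using adm unfolding admissible_def by blast
  have "1 \<le> k * P_const v n"
    using k P_const_pos[OF inj] by (simp add: Suc_le_eq)
  then have "\<beta> - (a + u) + int (k * P_const v n) *s (a + u)
      = (\<beta> - u + int (k * P_const v n) *s u) + int (k * P_const v n - 1) *s a"
    by (simp add: vec_eq_iff of_nat_diff algebra_simps)
  also have "\<dots> \<in> nat_span (v ` {..<n})"
    using nat_span_add[OF inj finite_lessThan mem nat_span_scale[OF inj finite_lessThan a]] .
  finally show ?thesis
    unfolding admissible_def using k by blast
qed

definition negative_nonface :: "(nat \<Rightarrow> int) \<Rightarrow> int^'d \<Rightarrow> nat set" where
  "negative_nonface r b =
     {j. j < n \<and> r j < 0 \<and> ray v j \<in> fan v T \<and> \<not> ray v j face_of sigma v T b}"

lemma Mgens_eq: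
  "Mgens v n T \<beta> =
    {foldr (rmult v T) (map (\<lambda>j. xmon (v j)) (sorted_list_of_set (negative_nonface r b))) (xmon b)
     | b r. b \<in> Box v T \<and> b + (\<Sum>j<n. r j *s v j) = \<beta> \<and> (\<forall>j<n. ray v j \<notin> fan v T \<longrightarrow> 0 \<le> r j)}"
  unfolding Mgens_def negative_nonface_def ..

lemma finite_negative_nonface: "finite (negative_nonface r b)"
  unfolding negative_nonface_def by simp

lemma foldr_rmult_xmon_cell:
  assumes S: "S \<in> T" and b: "rv b \<in> cone_of S" and js: "set js \<subseteq> S"
  shows "foldr (rmult v T) (map (\<lambda>j. xmon (v j)) js) (xmon b) = xmon (b + sum_list (map v js))
    \<and> rv (b + sum_list (map v js)) \<in> cone_of S"
  using js
proof (induction js)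
  case (Cons j js)
  then have IH: "foldr (rmult v T) (map (\<lambda>j. xmon (v j)) js) (xmon b) = xmon (b + sum_list (map v js))"
      "rv (b + sum_list (map v js)) \<in> cone_of S" and j: "j \<in> S"
    by auto
  have vertex: "vr j \<in> cone_of S"
    by (rule vertex_in_cone_of[OF cellD(1,2)[OF S] j])
  have "same_cone v T (v j) (b + sum_list (map v js))"
    unfolding same_cone_def using cell_cone_in_fan[OF S] vertex IH(2) by blast
  then show ?case
    using IH cone_of_add[OF cellD(1,2)[OF S] vertex IH(2)] by (simp add: rmult_xmon add.left_commute)
qed (use b in simp)

lemma xmon_add_vertex_in_Mmod:
  assumes S: "S \<in> T" "j \<in> S" and u: "xmon u \<in> Mmod v n T \<beta>" "rv u \<in> cone_of S"
  shows "xmon (v j + u) \<in> Mmod v n T \<beta>"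
proof -
  have same: "same_cone v T (v j) u"
    unfolding same_cone_def
    using cell_cone_in_fan[OF S(1)] vertex_in_cone_of[OF cellD(1,2)[OF S(1)] S(2)] u(2) by blast
  have "xmon (v j) \<in> Rsub v n T"
    using Rsub.gen[OF _ ray_in_fan[OF S]] cellD(1)[OF S(1)] S(2) by blast
  from Mmod.smult[OF this u(1)] show ?thesis
    by (simp add: rmult_xmon[OF same])
qed

lemma xmon_add_cell_comb_in_Mmod:
  assumes S: "S \<in> T" and F: "F \<subseteq> S"
    and u: "xmon u \<in> Mmod v n T \<beta>" "rv u \<in> cone_of S"
  shows "xmon ((\<Sum>j\<in>F. int (m j) *s v j) + u) \<in> Mmod v n T \<beta>"
proof -
  have add_vertex_multiple: "xmon (int l *s v j + u') \<in> Mmod v n T \<beta>"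
    if "j \<in> S" "xmon u' \<in> Mmod v n T \<beta>" "rv u' \<in> cone_of S" for j l u'
    using that(2,3)
  proof (induction l arbitrary: u')
    case (Suc l)
    have "rv (v j + u') \<in> cone_of S"
      using cone_of_add[OF cellD(1,2)[OF S] vertex_in_cone_of[OF cellD(1,2)[OF S] \<open>j \<in> S\<close>]] Suc.prems(2)
      by simp
    then have "xmon (int l *s v j + (v j + u')) \<in> Mmod v n T \<beta>"
      using Suc xmon_add_vertex_in_Mmod[OF S \<open>j \<in> S\<close>] by blast
    then show ?case
      by (simp add: algebra_simps vec_eq_iff)
  qed (simp add: vec_eq_iff)
  have "finite F"
    using cellD(2)[OF S] F finite_subset by blast
  then show ?thesis
    using F u
  proof (induction F arbitrary: u)
    case (insert j F)
    have "rv (int (m j) *s v j + u) \<in> cone_of S"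
      using cone_of_add[OF cellD(1,2)[OF S] nat_comb_in_cone_of[OF S, of "{j}" m]] insert by simp
    then have "xmon ((\<Sum>j\<in>F. int (m j) *s v j) + (int (m j) *s v j + u)) \<in> Mmod v n T \<beta>"
      using insert add_vertex_multiple by simp
    then show ?case
      using insert(1,2) by (simp add: algebra_simps)
  qed simp
qed

lemma box_generator_in_Mmod:
  assumes S: "S \<in> T" and q: "\<forall>j. 0 \<le> q j \<and> q j < 1" and b: "rv b = (\<Sum>j\<in>S. q j *\<^sub>R vr j)"
    and \<beta>: "b + (\<Sum>j<n. r j *s v j) = \<beta>" and r_nonneg: "\<forall>j<n. j \<notin> S \<longrightarrow> 0 \<le> r j"
  shows "negative_nonface r b \<subseteq> S"
    and "xmon (b + (\<Sum>j\<in>negative_nonface r b. v j)) \<in> Mmod v n T \<beta>"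
    and "rv (b + (\<Sum>j\<in>negative_nonface r b. v j)) \<in> cone_of S"
proof -
  let ?J = "negative_nonface r b"
  let ?js = "sorted_list_of_set ?J"
  show J_sub: "?J \<subseteq> S"
    using r_nonneg unfolding negative_nonface_def by force
  have "rv b \<in> cone_of S"
    unfolding mem_cone_of_iff[OF cellD(1,2)[OF S]] b using q by (intro exI[of _ q]) simp
  then have gen: "foldr (rmult v T) (map (\<lambda>j. xmon (v j)) ?js) (xmon b) = xmon (b + (\<Sum>j\<in>?J. v j))"
    and cone: "rv (b + (\<Sum>j\<in>?J. v j)) \<in> cone_of S"
    using foldr_rmult_xmon_cell[OF S _, of b ?js] J_sub finite_negative_nonface
    by (simp_all add: sum_list_distinct_conv_sum_set)
  show "rv (b + (\<Sum>j\<in>?J. v j)) \<in> cone_of S"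
    by (rule cone)
  have "b \<in> Box v T"
    unfolding Box_def using S q b by (intro CollectI bexI[of _ S] exI[of _ q]) auto
  moreover have "\<forall>j<n. ray v j \<notin> fan v T \<longrightarrow> 0 \<le> r j"
    using r_nonneg ray_in_fan[OF S] by blast
  ultimately have "foldr (rmult v T) (map (\<lambda>j. xmon (v j)) ?js) (xmon b) \<in> Mgens v n T \<beta>"
    unfolding Mgens_eq using \<beta> by blast
  then show "xmon (b + (\<Sum>j\<in>?J. v j)) \<in> Mmod v n T \<beta>"
    unfolding gen by (rule Mmod.gen)
qed

end

context graded_regular_fan
begin

lemma generator_support_admissible:
  assumes S: "S \<in> T" and q: "\<forall>j\<in>S. 0 \<le> q j" and b: "rv b = (\<Sum>j\<in>S. q j *\<^sub>R vr j)"
    and \<beta>: "b + (\<Sum>j<n. r j *s v j) = \<beta>" and r_nonneg: "\<forall>j<n. ray v j \<notin> fan v T \<longrightarrow> 0 \<le> r j"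
  shows "admissible \<beta> (b + (\<Sum>j\<in>negative_nonface r b. v j))"
proof -
  let ?J = "negative_nonface r b"
  define P where "P = P_const v n"
  obtain e where e: "int P *s b = (\<Sum>j\<in>S. e j *s v j)"
    and e_coords: "\<And>j. j \<in> S \<Longrightarrow> of_int (e j) = real P * q j"
    unfolding P_def using P_const_times_simplex_coords[OF inj cell_simplex[OF S] b] by blast
  have P: "1 \<le> P"
    using P_const_pos[OF inj] unfolding P_def by simp
  define k where "k = Suc (nat (\<Sum>j<n. \<bar>r j\<bar>))"
  have k: "- r j < int k" if "j < n" for j
    using member_le_sum[of j "{..<n}" "\<lambda>j. \<bar>r j\<bar>"] that unfolding k_def by auto
  have "k * 1 \<le> k * P"
    by (rule mult_le_mono2[OF P])
  then have kP: "int k \<le> int (k * P)"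
    by (simp only: of_nat_le_iff mult_1_right)
  define coef where "coef j = r j + (if j \<in> ?J then int (k * P) - 1 else 0)
      + (if j \<in> S then int k * e j else 0)" for j
  have coef_nonneg: "0 \<le> coef j" if j: "j < n" for j
  proof -
    have e_nonneg: "0 \<le> e j" if "j \<in> S" for j
      using e_coords[OF that] q that by (metis mult_nonneg_nonneg of_int_0_le_iff of_nat_0_le_iff)
    show ?thesis
    proof (cases "r j < 0 \<and> j \<notin> ?J")
      case True
      then have "ray v j face_of sigma v T b"
        using r_nonneg j unfolding negative_nonface_def by auto
      then have "j \<in> S" "0 < q j"
        using ray_face_of_sigma_iff[OF S q b j] r_nonneg j True by auto
      then have "0 < real_of_int (e j)"
        using e_coords[of j] P by simp
      then have "1 \<le> e j" by simp
      then have "int k * 1 \<le> int k * e j"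
        by (intro mult_left_mono) auto
      then have "0 \<le> r j + int k * e j"
        using k[OF j] by linarith
      then show ?thesis
        unfolding coef_def using \<open>j \<in> S\<close> True by simp
    next
      case False
      then show ?thesis
        unfolding coef_def using k[OF j] kP e_nonneg by (auto simp: add_nonneg_nonneg)
    qed
  qed
  have "?J \<subseteq> {..<n}"
    unfolding negative_nonface_def by auto
  then have "\<beta> - (b + (\<Sum>j\<in>?J. v j)) + int (k * P) *s (b + (\<Sum>j\<in>?J. v j)) = (\<Sum>j<n. coef j *s v j)"
    unfolding coef_def by (rule generator_shift_coeffs[OF \<beta> e _ cellD(1)[OF S]])
  then show ?thesis
    unfolding admissible_def P_def
    using nonneg_comb_in_nat_span[OF inj finite_lessThan, of coef] coef_nonneg
    by (intro exI[of _ k]) (simp add: k_def)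
qed

lemma Mmod_support_admissible:
  assumes "f \<in> Mmod v n T \<beta>" "f u \<noteq> 0"
  shows "admissible \<beta> u"
  using assms
proof (induction arbitrary: u rule: Mmod.induct)
  case (gen g)
  then obtain b r where g: "g = foldr (rmult v T) (map (\<lambda>j. xmon (v j)) (sorted_list_of_set (negative_nonface r b))) (xmon b)"
    and "b \<in> Box v T" "b + (\<Sum>j<n. r j *s v j) = \<beta>" "\<forall>j<n. ray v j \<notin> fan v T \<longrightarrow> 0 \<le> r j"
    unfolding Mgens_eq by blast
  moreover have "u = b + (\<Sum>j\<in>negative_nonface r b. v j)"
    using foldr_rmult_xmon_support[OF gen(2)[unfolded g]] finite_negative_nonface
    by (simp add: sum_list_distinct_conv_sum_set)
  ultimately show ?case
    unfolding Box_def using generator_support_admissible by blast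
next
  case (add f g)
  then show ?case by (cases "f u = 0") auto
next
  case (smult f m)
  then show ?case
    using admissible_add_nat_span Rsub_support by (metis rmult_nonzero_imp)
qed simp

lemma xmon_in_Mmod_if_admissible:
  assumes w: "rv w \<in> Kcone v n" and adm: "admissible \<beta> w"
  shows "xmon w \<in> Mmod v n T \<beta>"
proof -
  define P where "P = P_const v n"
  obtain S c where S: "S \<in> T" and c: "\<forall>j\<in>S. 0 \<le> c j" "rv w = (\<Sum>j\<in>S. c j *\<^sub>R vr j)"
    using Kcone_cell_coords[OF w] by blast
  obtain k a where k: "0 < k" and a: "\<beta> - w + int (k * P) *s w = (\<Sum>j<n. int (a j) *s v j)"
    using adm unfolding admissible_def P_def nat_span_iff_coeffs[OF inj finite_lessThan] by blast
  obtain e where e: "int P *s w = (\<Sum>j\<in>S. e j *s v j)"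
    and e_coords: "\<And>j. j \<in> S \<Longrightarrow> of_int (e j) = real P * c j"
    unfolding P_def using P_const_times_simplex_coords[OF inj cell_simplex[OF S] c(2)] by blast
  define b where "b = w - (\<Sum>j\<in>S. \<lfloor>c j\<rfloor> *s v j)"
  define q where "q j = (if j \<in> S then frac (c j) else 0)" for j
  define r where "r j = int (a j) + (if j \<in> S then \<lfloor>c j\<rfloor> - int k * e j else 0)" for j
  let ?J = "negative_nonface r b"
  have q: "\<forall>j. 0 \<le> q j \<and> q j < 1"
    unfolding q_def by (simp add: frac_lt_1)
  have q_nonneg: "\<forall>j\<in>S. 0 \<le> q j"
    using q by blast
  have b: "rv b = (\<Sum>j\<in>S. q j *\<^sub>R vr j)"
    unfolding b_def q_def frac_def using c(2)
    by (simp add: scaleR_diff_left sum_subtractf)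
  have \<beta>: "b + (\<Sum>j<n. r j *s v j) = \<beta>"
    unfolding b_def r_def by (rule box_part_shift_eq[OF a e cellD(1)[OF S]])
  have r_nonneg: "\<forall>j<n. j \<notin> S \<longrightarrow> 0 \<le> r j"
    unfolding r_def by simp
  note generator = box_generator_in_Mmod[OF S q b \<beta> r_nonneg]
  have floor_pos: "1 \<le> \<lfloor>c j\<rfloor>" if "j \<in> ?J" for j
  proof (rule ccontr)
    have j: "j \<in> S" "j < n" "r j < 0" "ray v j \<in> fan v T" "\<not> ray v j face_of sigma v T b"
      using that generator(1) unfolding negative_nonface_def by auto
    assume "\<not> 1 \<le> \<lfloor>c j\<rfloor>"
    then have "\<lfloor>c j\<rfloor> = 0"
      using c(1) j(1) by (simp add: le_floor_iff floor_eq_iff)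
    then have "0 < int k * e j"
      using j(1,3) unfolding r_def by simp
    then have "0 < e j"
      by (simp add: zero_less_mult_iff)
    then have "0 < real P * c j"
      using e_coords[OF j(1)] by (metis of_int_0_less_iff)
    then have "0 < q j"
      using \<open>\<lfloor>c j\<rfloor> = 0\<close> j(1) unfolding q_def frac_def by (simp add: zero_less_mult_iff del: of_nat_mult)
    then have "ray v j face_of sigma v T b"
      using ray_face_of_sigma_iff[OF S q_nonneg b j(2,4)] j(1) by simp
    with j(5) show False ..
  qed
  have w_eq: "w = (\<Sum>j\<in>S. int (nat (\<lfloor>c j\<rfloor> - (if j \<in> ?J then 1 else 0))) *s v j) + (b + (\<Sum>j\<in>?J. v j))"
    using sum_lowered_parts_eq[OF cellD(2)[OF S] generator(1), of "\<lambda>j. \<lfloor>c j\<rfloor>" v w] c(1) floor_pos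
    unfolding b_def[symmetric] by simp
  show ?thesis
    by (subst w_eq) (rule xmon_add_cell_comb_in_Mmod[OF S order_refl generator(2,3)])
qed

end

theorem proposition2p14:
  fixes v :: "nat \<Rightarrow> int^'d" and n :: nat and T :: "nat set set"
    and h :: "int^'d \<Rightarrow> int" and \<beta> w :: "int^'d"
  assumes "inj_on v {..<n}"
    and "int_span (v ` {..<n}) = UNIV"
    and "\<forall>x y. h (x + y) = h x + h y"
    and "\<forall>j<n. h (v j) = 1"
    and "regular_triangulation v n T"
    and "rv w \<in> Kcone v n"
  shows "xmon w \<in> Mmod v n T \<beta> \<longleftrightarrow>
    (\<exists>k::nat. 0 < k \<and> (\<beta> - w) + int (k * P_const v n) *s w \<in> nat_span (v ` {..<n}))"
proof -
  interpret graded_regular_fan v n T h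
    using assms(1,3,4,5) by unfold_locales (auto simp: Modules.additive_def)
  have "xmon w \<in> Mmod v n T \<beta> \<longleftrightarrow> admissible \<beta> w"
    using Mmod_support_admissible[of "xmon w" \<beta> w] xmon_in_Mmod_if_admissible[OF assms(6)] by auto
  then show ?thesis
    unfolding admissible_def by blast
qed

end
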